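(* Let $\mathcal{A}^{(1)},\dots,\mathcal{A}^{(k)}$ be mechanisms of the form $\mathcal{A}^{(i)}:\mathcal{S}^{(1)}\times\cdots\times\mathcal{S}^{(i-1)}\times\mathcal{D}\to\mathcal{S}^{(i)}$. Suppose there are constants $a>0$ and $b\in(0,1)$ such that each $\mathcal{A}^{(i)}$ is $\varepsilon_i$-DP with $\varepsilon_i\le\log\left(1+\frac{a}{k-b(i-1)}\right)$. Then for any $\delta\in(0,1)$, the $k$-fold adaptive composition of $\mathcal{A}^{(1)},\dots,\mathcal{A}^{(k)}$ is $(\varepsilon,\delta)$-DP with $$\varepsilon=\frac{a^2}{2k(1-b)}+\sqrt{\frac{2a^2\log(1/\delta)}{k(1-b)}}.$$
   Context: Differential privacy: two datasets $D,D'\in\mathcal{D}^n$ are neighboring if they differ in at most one coordinate. A randomized algorithm $\mathcal{A}:\mathcal{D}^n\to\mathcal{S}$ is $(\varepsilon,\delta)$-DP if for all neighboring $D,D'$ and all measurable $S\subseteq\mathcal{S}$, $\Pr[\mathcal{A}(D)\in S]\le e^{\varepsilon}\Pr[\mathcal{A}(D')\in S]+\delta$; $\varepsilon$-DP means $(\varepsilon,0)$-DP. A mechanism $\mathcal{A}^{(i)}$ that receives the outputs $s_{1:i-1}$ of previous mechanisms as auxiliary input is $\varepsilon_i$-DP if $\mathcal{A}^{(i)}(s_{1:i-1},\cdot)$ is $\varepsilon_i$-DP for every fixed $s_{1:i-1}$. The $k$-fold adaptive composition on input $D$ runs $s_i=\mathcal{A}^{(i)}(s_{1:i-1},D)$ for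 $i=1,\dots,k$ with independent internal randomness and outputs $s_{1:k}$. *)

theory Defs
  imports "HOL-Probability.Probability"
begin

definition neighboring :: "nat \<Rightarrow> 'd list \<Rightarrow> 'd list \<Rightarrow> bool" where
  "neighboring n D D' \<longleftrightarrow> length D = n \<and> length D' = n \<and>
     card {j. j < n \<and> D ! j \<noteq> D' ! j} \<le> 1"

definition dp :: "nat \<Rightarrow> 's measure \<Rightarrow> ('d list \<Rightarrow> 's measure) \<Rightarrow> real \<Rightarrow> real \<Rightarrow> bool" where
  "dp n M A eps delta \<longleftrightarrow>
     (\<forall>D D'. neighboring n D D' \<longrightarrow>
        (\<forall>X \<in> sets M. measure (A D) X \<le> exp eps * measure (A D') X + delta))"

text \<open>Mechanism number i (0-based) has output space S i and receives
  the previous outputs s_0..s_(i-1) as an (extensional) function on {..<i}, together with the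
  dataset; it returns a probability measure on S i.\<close>
fun adaptive_comp ::
  "(nat \<Rightarrow> 's measure) \<Rightarrow> (nat \<Rightarrow> (nat \<Rightarrow> 's) \<Rightarrow> 'd list \<Rightarrow> 's measure) \<Rightarrow> nat
     \<Rightarrow> 'd list \<Rightarrow> (nat \<Rightarrow> 's) measure" where
  "adaptive_comp S A 0 D = return (PiM {} S) (\<lambda>_. undefined)"
| "adaptive_comp S A (Suc i) D =
     bind (adaptive_comp S A i D) (\<lambda>s. distr (A i s D) (PiM {..<Suc i} S) (\<lambda>x. s(i := x)))"

end

theory Submission
  imports Defs
begin

(*
  On neighbouring datasets the law of each mechanism changes by a factor in
  [exp (-e), exp e], so the likelihood ratio h of one step lies in that interval and
  has mean 1. Convexity of x powr alpha bounds E[h powr alpha] by the chord through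
  the endpoints evaluated at 1, which equals cosh (e (alpha - 1/2)) / cosh (e / 2)
  and is at most exp (alpha (alpha - 1) e^2 / 2). Since a mechanism only sees earlier
  outputs, the likelihood ratio of the composition is a product of such step ratios
  and the moment bounds multiply. For the budgets e_j = ln (1 + a / (k - b j)) the
  sum of the e_j^2 telescopes to at most a^2 / (k (1 - b)), so the composition has
  alpha-th moment at most exp (alpha (alpha - 1) rho) with rho = a^2 / (2 k (1 - b))
  for every alpha > 1. Markov's inequality at alpha = 1 + sqrt (ln (1/delta) / rho)
  turns this into (rho + 2 sqrt (rho ln (1/delta)), delta)-differential privacy.
*)

section \<open>Real inequalities\<close>

text \<open>
  The chord of \<open>\<lambda>x. x powr \<alpha>\<close> through the points \<open>exp (-e)\<close> and \<open>exp e\<close>, evaluated at 1: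
  it bounds the \<alpha>-th moment of a density with mean 1 and values in \<open>[exp (-e), exp e]\<close>.
\<close>

definition chord_moment :: "real \<Rightarrow> real \<Rightarrow> real" where
  "chord_moment e \<alpha> =
     (exp (e * \<alpha>) * (1 - exp (-e)) + exp (-e * \<alpha>) * (exp e - 1)) / (exp e - exp (-e))"

lemma chord_moment_eq_cosh_ratio:
  fixes e \<alpha> :: real
  assumes "0 < e"
  shows "chord_moment e \<alpha> = cosh (e * (\<alpha> - 1/2)) / cosh (e / 2)"
proof -
  define u where "u = exp (e / 2)"
  define v where "v = exp (e * (\<alpha> - 1/2))"
  have u: "1 < u" using assms by (simp add: u_def)
  have v: "0 < v" by (simp add: v_def)
  have "exp e = u * u" "exp (-e) = 1 / (u * u)" "exp (e * \<alpha>) = v * u" "exp (-e * \<alpha>) = 1 / (v * u)"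
    by (simp_all add: u_def v_def exp_minus inverse_eq_divide flip: exp_add, simp_all add: algebra_simps)
  then have "chord_moment e \<alpha> = (v * u * (1 - 1 / (u * u)) + 1 / (v * u) * (u * u - 1)) / (u * u - 1 / (u * u))"
    by (simp add: chord_moment_def)
  also have "\<dots> = (v * v + 1) * u / (v * (u * u + 1))"
  proof -
    have "1 < u * u" using u by (simp add: less_1_mult)
    have "u * u - 1 / (u * u) = (u * u - 1) * (u * u + 1) / (u * u)"
      using u by (simp add: field_simps)
    moreover have "v * u * (1 - 1 / (u * u)) + 1 / (v * u) * (u * u - 1) = (u * u - 1) * (v * v + 1) / (v * u)"
      using u v by (simp add: field_simps)
    moreover have "w * X / (v * u) / (w * Y / (u * u)) = X * u / (v * Y)"
      if "0 < w" "0 < Y" for w X Y :: real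
      using that u v by (simp add: field_simps)
    ultimately show ?thesis using u \<open>1 < u * u\<close> by (simp add: add_pos_pos)
  qed
  also have "\<dots> = ((v + 1 / v) / 2) / ((u + 1 / u) / 2)"
  proof -
    have "v + 1 / v = (v * v + 1) / v" "u + 1 / u = (u * u + 1) / u"
      using u v by (simp_all add: field_simps)
    moreover have "(X / v / 2) / (Y / u / 2) = X * u / (v * Y)" for X Y :: real
      using u v by (simp add: field_simps)
    ultimately show ?thesis by simp
  qed
  also have "\<dots> = cosh (e * (\<alpha> - 1/2)) / cosh (e / 2)"
    by (simp add: cosh_def u_def v_def exp_minus inverse_eq_divide)
  finally show ?thesis .
qed

lemma sinh_le_mult_cosh:
  fixes t :: real
  assumes "0 \<le> t"
  shows "sinh t \<le> t * cosh t"
proof -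
  have "(\<lambda>x. x * cosh x - sinh x) 0 \<le> (\<lambda>x. x * cosh x - sinh x) t"
  proof (rule DERIV_nonneg_imp_increasing_open[OF assms])
    fix x :: real assume "0 < x" "x < t"
    have "((\<lambda>x. x * cosh x - sinh x) has_real_derivative x * sinh x) (at x)"
      by (auto intro!: derivative_eq_intros)
    with \<open>0 < x\<close> show "\<exists>y. ((\<lambda>x. x * cosh x - sinh x) has_real_derivative y) (at x) \<and> 0 \<le> y"
      by (intro exI[of _ "x * sinh x"]) simp
  qed (intro continuous_intros)
  then show ?thesis by simp
qed

lemma cosh_mult_exp_antimono:
  fixes x y :: real
  assumes "0 \<le> y" "y \<le> x"
  shows "cosh x * exp (-(x\<^sup>2) / 2) \<le> cosh y * exp (-(y\<^sup>2) / 2)"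
proof (rule DERIV_nonpos_imp_nonincreasing[OF assms(2)])
  fix t assume t: "y \<le> t" "t \<le> x"
  have "((\<lambda>t. cosh t * exp (-(t\<^sup>2) / 2)) has_real_derivative exp (-(t\<^sup>2) / 2) * (sinh t - t * cosh t)) (at t)"
    by (auto intro!: derivative_eq_intros simp: power2_eq_square algebra_simps)
  moreover have "exp (-(t\<^sup>2) / 2) * (sinh t - t * cosh t) \<le> 0"
    using sinh_le_mult_cosh[of t] t assms by (simp add: mult_nonneg_nonpos)
  ultimately show "\<exists>d. ((\<lambda>t. cosh t * exp (-(t\<^sup>2) / 2)) has_real_derivative d) (at t) \<and> d \<le> 0"
    by blast
qed

lemma chord_moment_pos: "0 < e \<Longrightarrow> 0 < chord_moment e \<alpha>"
  by (simp add: chord_moment_eq_cosh_ratio)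

lemma chord_moment_le_exp:
  fixes e \<alpha> :: real
  assumes "0 < e" "1 \<le> \<alpha>"
  shows "chord_moment e \<alpha> \<le> exp (\<alpha> * (\<alpha> - 1) * e\<^sup>2 / 2)"
proof -
  define x where "x = e * (\<alpha> - 1/2)"
  define y where "y = e / 2"
  have "0 \<le> y" "y \<le> x" using assms by (auto simp: x_def y_def mult_left_mono)
  have "cosh x = cosh x * exp (-(x\<^sup>2) / 2) * exp (x\<^sup>2 / 2)"
    by (simp flip: exp_add)
  also have "\<dots> \<le> cosh y * exp (-(y\<^sup>2) / 2) * exp (x\<^sup>2 / 2)"
    using cosh_mult_exp_antimono[OF \<open>0 \<le> y\<close> \<open>y \<le> x\<close>] by simp
  also have "\<dots> = cosh y * exp (\<alpha> * (\<alpha> - 1) * e\<^sup>2 / 2)"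
    by (simp add: mult.assoc x_def y_def power2_eq_square field_simps flip: exp_add)
  finally show ?thesis
    using assms by (simp add: chord_moment_eq_cosh_ratio x_def y_def divide_simps mult.commute)
qed

lemma powr_le_chord:
  fixes e \<alpha> h :: real
  assumes "0 < e" "1 \<le> \<alpha>" "exp (-e) \<le> h" "h \<le> exp e"
  shows "h powr \<alpha> \<le> ((exp e - h) * exp (-e * \<alpha>) + (h - exp (-e)) * exp (e * \<alpha>)) / (exp e - exp (-e))"
proof -
  define m M where "m = exp (-e)" and "M = exp e"
  define t where "t = (h - m) / (M - m)"
  have gap: "m < M" using assms by (simp add: m_def M_def)
  have "0 \<le> t" "t \<le> 1" using assms gap by (auto simp: t_def m_def M_def divide_simps)
  have "t * (M - m) = h - m" using gap by (simp add: t_def)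
  then have "h = (1 - t) *\<^sub>R m + t *\<^sub>R M" by (simp add: algebra_simps)
  then have "h powr \<alpha> \<le> (1 - t) * m powr \<alpha> + t * M powr \<alpha>"
    using convex_onD[OF powr_convex[OF assms(2)] \<open>0 \<le> t\<close> \<open>t \<le> 1\<close>, of m M] by (simp add: m_def M_def)
  also have "m powr \<alpha> = exp (-e * \<alpha>)" by (simp add: m_def powr_def)
  also have "M powr \<alpha> = exp (e * \<alpha>)" by (simp add: M_def powr_def mult.commute)
  also have "(1 - t) * exp (-e * \<alpha>) + t * exp (e * \<alpha>) = ((M - h) * exp (-e * \<alpha>) + (h - m) * exp (e * \<alpha>)) / (M - m)"
  proof -
    have "1 - t = (M - h) / (M - m)" using gap by (simp add: t_def field_simps)
    then show ?thesis by (simp add: t_def add_divide_distrib)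
  qed
  finally show ?thesis by (simp add: m_def M_def)
qed

lemma powr_le_affine_chord:
  fixes e \<alpha> :: real
  assumes e: "0 < e" and \<alpha>: "1 \<le> \<alpha>"
  obtains c0 c1 where "0 \<le> c0" "0 \<le> c1" "chord_moment e \<alpha> = c1 - c0"
    "\<And>h. exp (-e) \<le> h \<Longrightarrow> h \<le> exp e \<Longrightarrow> h powr \<alpha> + c0 \<le> c1 * h"
proof
  define c1 c0 where "c1 = (exp (e * \<alpha>) - exp (-e * \<alpha>)) / (exp e - exp (-e))"
    and "c0 = (exp (e * \<alpha> - e) - exp (e - e * \<alpha>)) / (exp e - exp (-e))"
  have "exp (-e) < exp e" using e by simp
  then show "0 \<le> c0" "0 \<le> c1" using e \<alpha> by (auto simp: c0_def c1_def)
  have exps: "exp (e * \<alpha> - e) = exp (-e) * exp (e * \<alpha>)" "exp (e - e * \<alpha>) = exp e * exp (-e * \<alpha>)"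
    by (simp_all flip: exp_add)
  show "chord_moment e \<alpha> = c1 - c0"
    unfolding chord_moment_def c1_def c0_def exps by (simp add: diff_divide_distrib[symmetric] algebra_simps)
  fix h assume h: "exp (-e) \<le> h" "h \<le> exp e"
  have "h powr \<alpha> \<le> ((exp e - h) * exp (-e * \<alpha>) + (h - exp (-e)) * exp (e * \<alpha>)) / (exp e - exp (-e))"
    using powr_le_chord[OF e \<alpha> h] .
  also have "\<dots> = c1 * h - c0"
    unfolding c1_def c0_def exps by (simp add: diff_divide_distrib[symmetric] algebra_simps)
  finally show "h powr \<alpha> + c0 \<le> c1 * h" by simp
qed

lemma le_add_powr:
  fixes x t \<alpha> :: real
  assumes "0 \<le> x" "0 < t" "1 < \<alpha>"
  shows "x \<le> t + t powr (1 - \<alpha>) * x powr \<alpha>"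
proof (cases "x \<le> t")
  case True
  then show ?thesis by (simp add: add_increasing2)
next
  case False
  then have "x = x powr \<alpha> * x powr (1 - \<alpha>)"
    using assms by (simp flip: powr_add)
  also have "\<dots> \<le> x powr \<alpha> * t powr (1 - \<alpha>)"
    using False assms by (intro mult_left_mono powr_mono2') auto
  finally show ?thesis
    using assms by (simp add: mult.commute add_increasing)
qed

definition budget :: "real \<Rightarrow> real \<Rightarrow> nat \<Rightarrow> nat \<Rightarrow> real" where
  "budget a b k j = ln (1 + a / (real k - b * real j))"

lemma budget_pos:
  assumes "0 < a" "b \<le> 1" "j < k"
  shows "0 < budget a b k j"
proof -
  have "b * real j \<le> real j"
    using mult_right_mono[of b 1 "real j"] assms by simp
  then have "0 < a / (real k - b * real j)"
    using assms by simp
  then show ?thesis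
    unfolding budget_def by (intro ln_gt_zero) simp
qed

lemma sum_power2_budget_le:
  assumes "0 < a" "0 < b" "b < 1"
  shows "(\<Sum>j<k. (budget a b k j)\<^sup>2) \<le> a\<^sup>2 / (real k * (1 - b))"
proof (cases "k = 0")
  case False
  define d where "d j = real k - b * real j" for j
  have d_pos: "0 < d j" if "j \<le> k" for j
  proof -
    have "b * real j \<le> b * real k" using that assms by (simp add: mult_left_mono)
    also have "\<dots> < real k" using assms False by simp
    finally show ?thesis by (simp add: d_def)
  qed
  have "(budget a b k j)\<^sup>2 \<le> a\<^sup>2 / b * (1 / d (Suc j) - 1 / d j)" if "j < k" for j
  proof -
    have d: "0 < d j" "0 < d (Suc j)" "d (Suc j) \<le> d j"
      using d_pos[of j] d_pos[of "Suc j"] that assms by (auto simp: d_def algebra_simps)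
    have "(budget a b k j)\<^sup>2 \<le> (a / d j)\<^sup>2"
      using d assms unfolding budget_def d_def[symmetric] by (intro power_mono ln_add_one_self_le_self) auto
    also have "\<dots> \<le> a\<^sup>2 / (d (Suc j) * d j)"
      using d by (simp add: power2_eq_square power_divide divide_left_mono mult_right_mono)
    also have "\<dots> = a\<^sup>2 / b * (1 / d (Suc j) - 1 / d j)"
      using d assms by (simp add: d_def field_simps)
    finally show ?thesis .
  qed
  then have "(\<Sum>j<k. (budget a b k j)\<^sup>2) \<le> (\<Sum>j<k. a\<^sup>2 / b * (1 / d (Suc j) - 1 / d j))"
    by (intro sum_mono) simp
  also have "\<dots> = a\<^sup>2 / b * (\<Sum>j<k. 1 / d (Suc j) - 1 / d j)"
    by (simp only: sum_distrib_left)
  also have "(\<Sum>j<k. 1 / d (Suc j) - 1 / d j) = 1 / d k - 1 / d 0"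
    by (rule sum_lessThan_telescope)
  also have "a\<^sup>2 / b * (1 / d k - 1 / d 0) = a\<^sup>2 / (real k * (1 - b))"
    using assms False by (simp add: d_def field_simps)
  finally show ?thesis .
qed simp

lemma prod_chord_moment_budget_le:
  assumes "0 < a" "0 < b" "b < 1" "1 \<le> \<alpha>"
  shows "(\<Prod>j<k. chord_moment (budget a b k j) \<alpha>) \<le> exp (\<alpha> * (\<alpha> - 1) * (a\<^sup>2 / (2 * real k * (1 - b))))"
proof -
  have "(\<Prod>j<k. chord_moment (budget a b k j) \<alpha>) \<le> (\<Prod>j<k. exp (\<alpha> * (\<alpha> - 1) * (budget a b k j)\<^sup>2 / 2))"
    using budget_pos assms
    by (intro prod_mono conjI chord_moment_le_exp less_imp_le[OF chord_moment_pos]) auto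
  also have "\<dots> = exp (\<alpha> * (\<alpha> - 1) / 2 * (\<Sum>j<k. (budget a b k j)\<^sup>2))"
    by (simp add: exp_sum sum_distrib_left)
  also have "\<dots> \<le> exp (\<alpha> * (\<alpha> - 1) / 2 * (a\<^sup>2 / (real k * (1 - b))))"
    using sum_power2_budget_le[OF assms(1-3), of k] assms
    by (subst exp_le_cancel_iff) (rule mult_left_mono, simp_all)
  finally show ?thesis by (simp add: mult.assoc)
qed

section \<open>Density ratios and their moments\<close>

lemma AE_le_of_density_le:
  fixes f g :: "'a \<Rightarrow> ennreal"
  assumes [measurable]: "f \<in> borel_measurable M" "g \<in> borel_measurable M"
    and fin: "(\<integral>\<^sup>+x. g x \<partial>M) \<noteq> \<infinity>"
    and le: "\<And>X. X \<in> sets M \<Longrightarrow> emeasure (density M f) X \<le> emeasure (density M g) X"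
  shows "AE x in M. f x \<le> g x"
proof -
  define X where "X = {x\<in>space M. g x < f x}"
  have X[measurable]: "X \<in> sets M" unfolding X_def by measurable
  have fin_X: "(\<integral>\<^sup>+x. g x * indicator X x \<partial>M) \<noteq> \<infinity>"
  proof -
    have "(\<integral>\<^sup>+x. g x * indicator X x \<partial>M) \<le> (\<integral>\<^sup>+x. g x \<partial>M)"
      by (intro nn_integral_mono) (simp split: split_indicator)
    with fin show ?thesis by (auto simp: top_unique)
  qed
  have "AE x in M. f x * indicator X x \<le> g x * indicator X x"
  proof (rule ccontr)
    assume "\<not> ?thesis"
    then have "(\<integral>\<^sup>+x. g x * indicator X x \<partial>M) < (\<integral>\<^sup>+x. f x * indicator X x \<partial>M)"
      by (intro nn_integral_less[OF _ _ fin_X]) (auto simp: X_def split: split_indicator)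
    with le[OF X] show False by (simp add: emeasure_density)
  qed
  with AE_space show ?thesis
  proof eventually_elim
    case (elim x)
    show ?case
    proof (rule ccontr)
      assume "\<not> f x \<le> g x"
      then have "x \<in> X" using elim by (simp add: X_def not_le)
      with elim \<open>\<not> f x \<le> g x\<close> show False by simp
    qed
  qed
qed

lemma density_bounded_ratio:
  assumes "prob_space P" "prob_space R" and sets_eq: "sets P = sets R" and "0 \<le> e"
    and le: "\<And>X. X \<in> sets R \<Longrightarrow> emeasure P X \<le> exp e * emeasure R X"
    and ge: "\<And>X. X \<in> sets R \<Longrightarrow> emeasure R X \<le> exp e * emeasure P X"
  obtains h where "h \<in> borel_measurable R" "\<And>x. exp (-e) \<le> h x" "\<And>x. h x \<le> exp e"
    "P = density R (\<lambda>x. ennreal (h x))"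
proof -
  interpret P: prob_space P by fact
  interpret R: prob_space R by fact
  have "absolutely_continuous R P"
    unfolding absolutely_continuous_def
  proof
    fix X assume "X \<in> null_sets R"
    then show "X \<in> null_sets P" using le[of X] sets_eq by (auto simp: null_sets_def)
  qed
  then have dens: "density R (RN_deriv R P) = P"
    using sets_eq by (intro R.density_RN_deriv) auto
  have upper: "AE x in R. RN_deriv R P x \<le> exp e"
  proof (rule AE_le_of_density_le)
    fix X assume "X \<in> sets R"
    then show "emeasure (density R (RN_deriv R P)) X \<le> emeasure (density R (\<lambda>_. ennreal (exp e))) X"
      using le by (simp add: dens emeasure_density_const)
  qed (simp_all add: R.emeasure_space_1)
  have lower: "AE x in R. exp (-e) \<le> RN_deriv R P x"
  proof (rule AE_le_of_density_le)
    fix X assume X: "X \<in> sets R"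
    have "ennreal (exp (-e)) * emeasure R X \<le> ennreal (exp (-e)) * (ennreal (exp e) * emeasure P X)"
      using ge[OF X] by (rule mult_left_mono) simp
    also have "\<dots> = emeasure P X"
      by (simp add: mult.assoc[symmetric] ennreal_mult[symmetric] flip: exp_add)
    finally show "emeasure (density R (\<lambda>_. ennreal (exp (-e)))) X \<le> emeasure (density R (RN_deriv R P)) X"
      using X by (simp add: dens emeasure_density_const)
  next
    have "(\<integral>\<^sup>+x. RN_deriv R P x \<partial>R) = emeasure (density R (RN_deriv R P)) (space R)"
      by (subst emeasure_density) (auto intro!: nn_integral_cong)
    also have "\<dots> = 1"
      using dens sets_eq_imp_space_eq[OF sets_eq] P.emeasure_space_1 by simp
    finally show "(\<integral>\<^sup>+x. RN_deriv R P x \<partial>R) \<noteq> \<infinity>" by simp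
  qed simp_all
  define h where "h x = max (exp (-e)) (min (exp e) (enn2real (RN_deriv R P x)))" for x
  have h[measurable]: "h \<in> borel_measurable R" unfolding h_def by measurable
  have "AE x in R. RN_deriv R P x = ennreal (h x)"
    using upper lower
  proof eventually_elim
    case (elim x)
    then show ?case
    proof (cases "RN_deriv R P x" rule: ennreal_cases)
      case (real r)
      then have "exp (-e) \<le> r" "r \<le> exp e" using elim by (auto simp: ennreal_le_iff)
      then show ?thesis using real by (simp add: h_def)
    qed (use elim in \<open>simp add: top_unique\<close>)
  qed
  then have "density R (RN_deriv R P) = density R (\<lambda>x. ennreal (h x))"
    by (intro density_cong) simp_all
  then have "P = density R (\<lambda>x. ennreal (h x))"
    by (simp add: dens)
  moreover have "exp (-e) \<le> h x" "h x \<le> exp e" for x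
    using \<open>0 \<le> e\<close> by (auto simp: h_def)
  ultimately show ?thesis using that h by blast
qed

lemma nn_integral_weighted_powr_le:
  fixes w h :: "'a \<Rightarrow> real"
  assumes [measurable]: "w \<in> borel_measurable R" "h \<in> borel_measurable R"
    and w: "\<And>t. 0 \<le> w t" and e: "0 < e" and \<alpha>: "1 \<le> \<alpha>"
    and h: "\<And>t. exp (-e) \<le> h t" "\<And>t. h t \<le> exp e"
    and mean: "(\<integral>\<^sup>+t. ennreal (w t * h t) \<partial>R) = (\<integral>\<^sup>+t. ennreal (w t) \<partial>R)"
    and bound: "(\<integral>\<^sup>+t. ennreal (w t) \<partial>R) \<le> ennreal C" and "0 \<le> C"
  shows "(\<integral>\<^sup>+t. ennreal (w t * h t powr \<alpha>) \<partial>R) \<le> ennreal (chord_moment e \<alpha> * C)"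
proof -
  obtain c0 c1 where c: "0 \<le> c0" "0 \<le> c1" "chord_moment e \<alpha> = c1 - c0"
    and chord: "\<And>t. h t powr \<alpha> + c0 \<le> c1 * h t"
    using powr_le_affine_chord[OF e \<alpha>] h by metis
  have h_nonneg: "0 \<le> h t" for t using h(1)[of t] by (meson exp_ge_zero order_trans)
  obtain I where I: "(\<integral>\<^sup>+t. ennreal (w t) \<partial>R) = ennreal I" "0 \<le> I" "I \<le> C"
    using bound \<open>0 \<le> C\<close> by (cases "\<integral>\<^sup>+t. ennreal (w t) \<partial>R" rule: ennreal_cases) (auto simp: ennreal_le_iff top_unique)
  define A where "A = (\<integral>\<^sup>+t. ennreal (w t * h t powr \<alpha>) \<partial>R)"
  have "A + ennreal (c0 * I) = (\<integral>\<^sup>+t. ennreal (w t * h t powr \<alpha>) + ennreal c0 * ennreal (w t) \<partial>R)"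
    using c I by (simp add: A_def nn_integral_add nn_integral_cmult ennreal_mult)
  also have "\<dots> \<le> (\<integral>\<^sup>+t. ennreal c1 * ennreal (w t * h t) \<partial>R)"
  proof (rule nn_integral_mono)
    fix t
    have "w t * h t powr \<alpha> + c0 * w t \<le> c1 * (w t * h t)"
      using mult_left_mono[OF chord w] by (simp add: algebra_simps)
    then have "ennreal (w t * h t powr \<alpha> + c0 * w t) \<le> ennreal (c1 * (w t * h t))"
      by (rule ennreal_leI)
    then show "ennreal (w t * h t powr \<alpha>) + ennreal c0 * ennreal (w t) \<le> ennreal c1 * ennreal (w t * h t)"
      using w[of t] h_nonneg[of t] c by (simp add: ennreal_mult ennreal_plus)
  qed
  also have "\<dots> = ennreal (c1 * I)"
    using c I by (simp add: nn_integral_cmult mean ennreal_mult)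
  finally have sum_le: "A + ennreal (c0 * I) \<le> ennreal (c1 * I)" .
  then obtain a where a: "A = ennreal a" "0 \<le> a"
    by (cases A rule: ennreal_cases) (auto simp: top_unique)
  have "ennreal (a + c0 * I) \<le> ennreal (c1 * I)"
    using sum_le a c I by (simp add: ennreal_plus)
  then have "a + c0 * I \<le> c1 * I"
    using c I by (simp add: ennreal_le_iff)
  then have "a \<le> chord_moment e \<alpha> * I"
    by (simp add: c left_diff_distrib)
  also have "\<dots> \<le> chord_moment e \<alpha> * C"
    using I chord_moment_pos[OF e] by (simp add: mult_left_mono)
  finally show ?thesis
    using a by (simp add: A_def ennreal_leI)
qed

text \<open>Equivalently, \<open>exp ((\<alpha> - 1) * D\<^sub>\<alpha>(P || Q)) \<le> C\<close> for the Renyi divergence \<open>D\<^sub>\<alpha>\<close>.\<close>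

definition density_moment_le :: "'a measure \<Rightarrow> 'a measure \<Rightarrow> real \<Rightarrow> real \<Rightarrow> bool" where
  "density_moment_le P Q \<alpha> C \<longleftrightarrow>
     (\<exists>f \<in> borel_measurable Q. (\<forall>x. 0 \<le> f x) \<and> P = density Q (\<lambda>x. ennreal (f x)) \<and>
        (\<integral>\<^sup>+x. ennreal (f x powr \<alpha>) \<partial>Q) \<le> ennreal C)"

lemma density_moment_le_refl:
  assumes "prob_space Q"
  shows "density_moment_le Q Q \<alpha> 1"
  unfolding density_moment_le_def
proof (intro bexI[of _ "\<lambda>_. 1"] conjI)
  show "(\<integral>\<^sup>+x. ennreal (1 powr \<alpha>) \<partial>Q) \<le> ennreal 1"
    using prob_space.emeasure_space_1[OF assms] by simp
qed (simp_all add: density_1)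

lemma density_moment_le_mono:
  "density_moment_le P Q \<alpha> C \<Longrightarrow> C \<le> C' \<Longrightarrow> density_moment_le P Q \<alpha> C'"
  unfolding density_moment_le_def by (meson ennreal_leI order_trans)

lemma measure_le_of_density_moment_le:
  assumes "density_moment_le P Q \<alpha> C" "prob_space P" "prob_space Q"
    and X: "X \<in> sets Q" and t: "0 < t" and \<alpha>: "1 < \<alpha>" and "0 \<le> C"
  shows "measure P X \<le> t * measure Q X + t powr (1 - \<alpha>) * C"
proof -
  interpret P: prob_space P by fact
  interpret Q: prob_space Q by fact
  obtain f where f[measurable]: "f \<in> borel_measurable Q" and f_nonneg: "\<And>x. 0 \<le> f x"
    and P: "P = density Q (\<lambda>x. ennreal (f x))" and moment: "(\<integral>\<^sup>+x. ennreal (f x powr \<alpha>) \<partial>Q) \<le> ennreal C"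
    using assms(1) by (auto simp: density_moment_le_def)
  have "emeasure P X = (\<integral>\<^sup>+x. ennreal (f x) * indicator X x \<partial>Q)"
    unfolding P by (rule emeasure_density) (use X in simp_all)
  also have "\<dots> \<le> (\<integral>\<^sup>+x. ennreal t * indicator X x + ennreal (t powr (1 - \<alpha>)) * ennreal (f x powr \<alpha>) \<partial>Q)"
  proof (rule nn_integral_mono)
    fix x
    have "ennreal (f x) \<le> ennreal t + ennreal (t powr (1 - \<alpha>)) * ennreal (f x powr \<alpha>)"
      using le_add_powr[OF f_nonneg t \<alpha>, of x] t by (simp add: ennreal_leI flip: ennreal_mult ennreal_plus)
    then show "ennreal (f x) * indicator X x \<le> ennreal t * indicator X x + ennreal (t powr (1 - \<alpha>)) * ennreal (f x powr \<alpha>)"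
      by (cases "x \<in> X") auto
  qed
  also have "\<dots> = ennreal t * emeasure Q X + ennreal (t powr (1 - \<alpha>)) * (\<integral>\<^sup>+x. ennreal (f x powr \<alpha>) \<partial>Q)"
    using X by (simp add: nn_integral_add nn_integral_cmult nn_integral_cmult_indicator)
  also have "\<dots> \<le> ennreal (t * measure Q X + t powr (1 - \<alpha>) * C)"
    using moment t \<open>0 \<le> C\<close>
    by (simp add: Q.emeasure_eq_measure ennreal_mult ennreal_plus add_left_mono mult_left_mono)
  finally have "ennreal (measure P X) \<le> ennreal (t * measure Q X + t powr (1 - \<alpha>) * C)"
    by (simp only: P.emeasure_eq_measure)
  moreover have "0 \<le> t * measure Q X + t powr (1 - \<alpha>) * C"
    using t \<open>0 \<le> C\<close> by simp
  ultimately show ?thesis by (simp only: ennreal_le_iff)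
qed

lemma measure_le_of_zcdp:
  assumes zcdp: "\<And>\<alpha>. 1 < \<alpha> \<Longrightarrow> density_moment_le P Q \<alpha> (exp (\<alpha> * (\<alpha> - 1) * \<rho>))"
    and "prob_space P" "prob_space Q" "X \<in> sets Q" and "0 < \<rho>" "0 < \<delta>" "\<delta> < 1"
  shows "measure P X \<le> exp (\<rho> + 2 * sqrt (\<rho> * ln (1 / \<delta>))) * measure Q X + \<delta>"
proof -
  define L where "L = ln (1 / \<delta>)"
  define \<alpha> where "\<alpha> = 1 + sqrt (L / \<rho>)"
  define \<epsilon> where "\<epsilon> = \<rho> + 2 * sqrt (\<rho> * L)"
  have "0 < L" "1 < \<alpha>" using assms by (simp_all add: L_def \<alpha>_def)
  have "measure P X \<le> exp \<epsilon> * measure Q X + exp \<epsilon> powr (1 - \<alpha>) * exp (\<alpha> * (\<alpha> - 1) * \<rho>)"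
    using assms \<open>1 < \<alpha>\<close> by (intro measure_le_of_density_moment_le zcdp) auto
  also have "exp \<epsilon> powr (1 - \<alpha>) * exp (\<alpha> * (\<alpha> - 1) * \<rho>) = exp ((\<alpha> - 1)\<^sup>2 * \<rho> - 2 * (\<alpha> - 1) * sqrt (\<rho> * L))"
    by (simp add: powr_def \<epsilon>_def power2_eq_square algebra_simps flip: exp_add)
  also have "(\<alpha> - 1)\<^sup>2 * \<rho> - 2 * (\<alpha> - 1) * sqrt (\<rho> * L) = - L"
  proof -
    have "(\<alpha> - 1)\<^sup>2 * \<rho> = L" "(\<alpha> - 1) * sqrt (\<rho> * L) = L"
      using \<open>0 < L\<close> \<open>0 < \<rho>\<close> by (simp_all add: \<alpha>_def real_sqrt_mult[symmetric] real_sqrt_mult_self)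
    then show ?thesis by (simp add: algebra_simps)
  qed
  also have "exp (- L) = \<delta>"
    using \<open>0 < \<delta>\<close> by (simp add: L_def ln_div)
  finally show ?thesis
    by (simp only: \<epsilon>_def L_def)
qed

section \<open>Kernels that keep their input\<close>

lemma AE_eq_of_distr_eq_return:
  fixes g :: "'b \<Rightarrow> ennreal"
  assumes fibre: "distr \<mu> M \<pi> = return M s" and s: "s \<in> space M"
    and [measurable]: "\<pi> \<in> \<mu> \<rightarrow>\<^sub>M M" "g \<in> borel_measurable M"
  shows "AE t in \<mu>. g (\<pi> t) = g s"
proof -
  have "AE y in return M s. g y = g s"
    using s by (subst AE_return) simp_all
  then have "AE y in distr \<mu> M \<pi>. g y = g s"
    unfolding fibre .
  then show ?thesis
    by (subst (asm) AE_distr_iff) simp_all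
qed

lemma nn_integral_fibre_cmult:
  fixes g \<psi> :: "_ \<Rightarrow> ennreal"
  assumes "distr \<mu> M \<pi> = return M s" "s \<in> space M" "\<pi> \<in> \<mu> \<rightarrow>\<^sub>M M" "g \<in> borel_measurable M"
    and "\<psi> \<in> borel_measurable \<mu>"
  shows "(\<integral>\<^sup>+t. g (\<pi> t) * \<psi> t \<partial>\<mu>) = g s * (\<integral>\<^sup>+t. \<psi> t \<partial>\<mu>)"
proof -
  have "(\<integral>\<^sup>+t. g (\<pi> t) * \<psi> t \<partial>\<mu>) = (\<integral>\<^sup>+t. g s * \<psi> t \<partial>\<mu>)"
    using AE_eq_of_distr_eq_return[OF assms(1-4)] by (intro nn_integral_cong_AE) auto
  also have "\<dots> = g s * (\<integral>\<^sup>+t. \<psi> t \<partial>\<mu>)"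
    using assms(5) by (rule nn_integral_cmult)
  finally show ?thesis .
qed

lemma distr_bind_fibre:
  assumes P: "P \<in> space (prob_algebra M)" and K: "K \<in> M \<rightarrow>\<^sub>M prob_algebra N"
    and \<pi>: "\<pi> \<in> N \<rightarrow>\<^sub>M M" and fibre: "\<And>s. s \<in> space M \<Longrightarrow> distr (K s) M \<pi> = return M s"
  shows "distr (bind P K) M \<pi> = P"
proof -
  have sets_P: "sets P = sets M" and "prob_space P"
    using P by (auto simp: space_prob_algebra)
  interpret prob_space P by fact
  have K': "K \<in> P \<rightarrow>\<^sub>M subprob_algebra N"
    using measurable_prob_algebraD[OF K] by (simp add: measurable_cong_sets[OF sets_P refl])
  have "distr (bind P K) M \<pi> = bind P (\<lambda>s. distr (K s) M \<pi>)"
    by (rule distr_bind[OF K' not_empty \<pi>])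
  also have "\<dots> = bind P (return M)"
    using fibre sets_eq_imp_space_eq[OF sets_P] by (intro bind_cong) auto
  also have "\<dots> = P"
    by (rule bind_return''[OF sets_P])
  finally show ?thesis .
qed

lemma bind_density_fibre:
  fixes f :: "_ \<Rightarrow> ennreal"
  assumes Q: "Q \<in> space (prob_algebra M)" and K: "K \<in> M \<rightarrow>\<^sub>M prob_algebra N"
    and \<pi>[measurable]: "\<pi> \<in> N \<rightarrow>\<^sub>M M" and fibre: "\<And>s. s \<in> space M \<Longrightarrow> distr (K s) M \<pi> = return M s"
    and f[measurable]: "f \<in> borel_measurable M"
  shows "bind (density Q f) K = density (bind Q K) (\<lambda>t. f (\<pi> t))"
proof -
  have sets_Q: "sets Q = sets M" and "prob_space Q"
    using Q by (auto simp: space_prob_algebra)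
  interpret prob_space Q by fact
  have space_Q: "space Q = space M" using sets_eq_imp_space_eq[OF sets_Q] .
  have K_sub: "K \<in> M \<rightarrow>\<^sub>M subprob_algebra N" by (rule measurable_prob_algebraD[OF K])
  have KQ: "K \<in> Q \<rightarrow>\<^sub>M subprob_algebra N" and Kd: "K \<in> density Q f \<rightarrow>\<^sub>M subprob_algebra N"
    using K_sub by (simp_all add: measurable_cong_sets[OF sets_Q refl])
  have sets_QK: "sets (bind Q K) = sets N" and sets_dK: "sets (bind (density Q f) K) = sets N"
    by (simp_all add: sets_bind_measurable[OF KQ] sets_bind_measurable[OF Kd] not_empty)
  show ?thesis
  proof (rule measure_eqI)
    show "sets (bind (density Q f) K) = sets (density (bind Q K) (\<lambda>t. f (\<pi> t)))"
      by (simp add: sets_QK sets_dK)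
  next
    fix X assume "X \<in> sets (bind (density Q f) K)"
    then have X[measurable]: "X \<in> sets N" by (simp add: sets_dK)
    have "emeasure (bind (density Q f) K) X = (\<integral>\<^sup>+s. emeasure (K s) X \<partial>density Q f)"
      by (rule emeasure_bind[OF _ Kd X]) (simp add: not_empty)
    also have "\<dots> = (\<integral>\<^sup>+s. f s * emeasure (K s) X \<partial>Q)"
      using measurable_emeasure_kernel[OF K_sub X]
      by (intro nn_integral_density) (simp_all add: measurable_cong_sets[OF sets_Q refl])
    also have "\<dots> = (\<integral>\<^sup>+s. \<integral>\<^sup>+t. f (\<pi> t) * indicator X t \<partial>K s \<partial>Q)"
    proof (intro nn_integral_cong)
      fix s assume "s \<in> space Q"
      then have s: "s \<in> space M" by (simp add: space_Q)
      have sets_Ks: "sets (K s) = sets N"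
        using measurable_space[OF K s] by (simp add: space_prob_algebra)
      have "\<pi> \<in> K s \<rightarrow>\<^sub>M M" "indicator X \<in> borel_measurable (K s)" "X \<in> sets (K s)"
        by (simp_all add: measurable_cong_sets[OF sets_Ks refl] sets_Ks)
      then show "f s * emeasure (K s) X = (\<integral>\<^sup>+t. f (\<pi> t) * indicator X t \<partial>K s)"
        using nn_integral_fibre_cmult[OF fibre[OF s] s, of f "indicator X"] by simp
    qed
    also have "\<dots> = (\<integral>\<^sup>+t. f (\<pi> t) * indicator X t \<partial>bind Q K)"
      by (rule nn_integral_bind[symmetric, OF _ KQ]) measurable
    also have "\<dots> = emeasure (density (bind Q K) (\<lambda>t. f (\<pi> t))) X"
      using sets_QK by (intro emeasure_density[symmetric]) (simp_all add: measurable_cong_sets[OF sets_QK refl])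
    finally show "emeasure (bind (density Q f) K) X = emeasure (density (bind Q K) (\<lambda>t. f (\<pi> t))) X" .
  qed
qed

lemma nn_integral_bind_fibre:
  assumes P: "P \<in> space (prob_algebra M)" and K: "K \<in> M \<rightarrow>\<^sub>M prob_algebra N"
    and \<pi>: "\<pi> \<in> N \<rightarrow>\<^sub>M M" and fibre: "\<And>s. s \<in> space M \<Longrightarrow> distr (K s) M \<pi> = return M s"
    and G: "G \<in> borel_measurable M"
  shows "(\<integral>\<^sup>+t. G (\<pi> t) \<partial>bind P K) = (\<integral>\<^sup>+s. G s \<partial>P)"
proof -
  have "\<pi> \<in> bind P K \<rightarrow>\<^sub>M M"
    using \<pi> by (simp add: measurable_cong_sets[OF sets_bind'[OF P K] refl])
  then have "(\<integral>\<^sup>+t. G (\<pi> t) \<partial>bind P K) = (\<integral>\<^sup>+s. G s \<partial>distr (bind P K) M \<pi>)"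
    using G by (simp add: nn_integral_distr)
  then show ?thesis
    by (simp add: distr_bind_fibre[OF P K \<pi> fibre])
qed

lemma emeasure_bind_le_scaled:
  assumes P: "P \<in> space (prob_algebra M)"
    and K: "K \<in> M \<rightarrow>\<^sub>M prob_algebra N" and L: "L \<in> M \<rightarrow>\<^sub>M prob_algebra N"
    and le: "\<And>s X. s \<in> space M \<Longrightarrow> X \<in> sets N \<Longrightarrow> emeasure (K s) X \<le> c * emeasure (L s) X"
    and X: "X \<in> sets N"
  shows "emeasure (bind P K) X \<le> c * emeasure (bind P L) X"
proof -
  have sets_P: "sets P = sets M"
    using P by (simp add: space_prob_algebra)
  have "emeasure (bind P K) X = (\<integral>\<^sup>+s. emeasure (K s) X \<partial>P)"
    by (rule emeasure_bind_prob_algebra[OF P K X])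
  also have "\<dots> \<le> (\<integral>\<^sup>+s. c * emeasure (L s) X \<partial>P)"
    using le X sets_eq_imp_space_eq[OF sets_P] by (intro nn_integral_mono) auto
  also have "\<dots> = c * (\<integral>\<^sup>+s. emeasure (L s) X \<partial>P)"
    using measurable_emeasure_kernel[OF measurable_prob_algebraD[OF L] X]
    by (intro nn_integral_cmult) (simp add: measurable_cong_sets[OF sets_P refl])
  also have "\<dots> = c * emeasure (bind P L) X"
    by (simp add: emeasure_bind_prob_algebra[OF P L X])
  finally show ?thesis .
qed

lemma bind_density_bounded_ratio:
  assumes P: "P \<in> space (prob_algebra M)"
    and K: "K \<in> M \<rightarrow>\<^sub>M prob_algebra N" and L: "L \<in> M \<rightarrow>\<^sub>M prob_algebra N"
    and KL: "\<And>s X. s \<in> space M \<Longrightarrow> X \<in> sets N \<Longrightarrow> emeasure (K s) X \<le> exp e * emeasure (L s) X"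
    and LK: "\<And>s X. s \<in> space M \<Longrightarrow> X \<in> sets N \<Longrightarrow> emeasure (L s) X \<le> exp e * emeasure (K s) X"
    and "0 \<le> e"
  obtains h where "h \<in> borel_measurable N" "\<And>x. exp (-e) \<le> h x" "\<And>x. h x \<le> exp e"
    "bind P K = density (bind P L) (\<lambda>x. ennreal (h x))"
proof -
  have sets_PL: "sets (bind P L) = sets N" and sets_PK: "sets (bind P K) = sets N"
    by (simp_all add: sets_bind'[OF P L] sets_bind'[OF P K])
  have "prob_space (bind P K)" "prob_space (bind P L)"
    using prob_space_bind'[OF P K] prob_space_bind'[OF P L] by auto
  moreover have "sets (bind P K) = sets (bind P L)"
    using sets_PL sets_PK by simp
  moreover have "emeasure (bind P K) X \<le> exp e * emeasure (bind P L) X"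
    "emeasure (bind P L) X \<le> exp e * emeasure (bind P K) X" if "X \<in> sets (bind P L)" for X
    using that sets_PL by (auto intro: emeasure_bind_le_scaled[OF P K L KL] emeasure_bind_le_scaled[OF P L K LK])
  ultimately obtain h where "h \<in> borel_measurable (bind P L)" "\<And>x. exp (-e) \<le> h x" "\<And>x. h x \<le> exp e"
    "bind P K = density (bind P L) (\<lambda>x. ennreal (h x))"
    using \<open>0 \<le> e\<close> by (metis density_bounded_ratio)
  with that show ?thesis
    by (simp add: measurable_cong_sets[OF sets_PL refl])
qed

lemma nn_integral_powr_density:
  fixes f :: "'a \<Rightarrow> real"
  assumes "f \<in> borel_measurable Q" "\<And>x. 0 \<le> f x"
  shows "(\<integral>\<^sup>+x. ennreal (f x powr (\<alpha> - 1)) \<partial>density Q (\<lambda>x. ennreal (f x))) = (\<integral>\<^sup>+x. ennreal (f x powr \<alpha>) \<partial>Q)"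
proof -
  have "f x * f x powr (\<alpha> - 1) = f x powr \<alpha>" for x
    using powr_mult_base[OF assms(2), of x "\<alpha> - 1"] by simp
  then show ?thesis
    using assms by (subst nn_integral_density) (simp_all flip: ennreal_mult)
qed

text \<open>
  The moment of the product density is bounded without disintegrating over the past:
  weighting the last step by the (\<alpha> - 1)-st power of the previous density, both
  kernels reproduce the same weighted mass, because they do not change the past.
\<close>

lemma nn_integral_powr_product_density_le:
  assumes P: "P \<in> space (prob_algebra M)" and Q: "Q \<in> space (prob_algebra M)"
    and K: "K \<in> M \<rightarrow>\<^sub>M prob_algebra N" and L: "L \<in> M \<rightarrow>\<^sub>M prob_algebra N"
    and \<pi>[measurable]: "\<pi> \<in> N \<rightarrow>\<^sub>M M"
    and fibre_K: "\<And>s. s \<in> space M \<Longrightarrow> distr (K s) M \<pi> = return M s"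
    and fibre_L: "\<And>s. s \<in> space M \<Longrightarrow> distr (L s) M \<pi> = return M s"
    and f[measurable]: "f \<in> borel_measurable M" and f_nonneg: "\<And>x. 0 \<le> f x"
    and P_eq: "P = density Q (\<lambda>x. ennreal (f x))"
    and moment: "(\<integral>\<^sup>+x. ennreal (f x powr \<alpha>) \<partial>Q) \<le> ennreal C" and "0 \<le> C"
    and h[measurable]: "h \<in> borel_measurable N"
    and h_bounds: "\<And>x. exp (-e) \<le> h x" "\<And>x. h x \<le> exp e"
    and PK_eq: "bind P K = density (bind P L) (\<lambda>x. ennreal (h x))"
    and e: "0 < e" and \<alpha>: "1 \<le> \<alpha>"
  shows "(\<integral>\<^sup>+t. ennreal ((f (\<pi> t) * h t) powr \<alpha>) \<partial>bind Q L) \<le> ennreal (chord_moment e \<alpha> * C)"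
proof -
  have sets_Q: "sets Q = sets M" using Q by (simp add: space_prob_algebra)
  have sets_PL: "sets (bind P L) = sets N" and sets_QL: "sets (bind Q L) = sets N"
    by (simp_all add: sets_bind'[OF P L] sets_bind'[OF Q L])
  have h_nonneg: "0 \<le> h x" for x
    using h_bounds(1)[of x] by (meson exp_ge_zero order_trans)
  define w where "w t = f (\<pi> t) powr (\<alpha> - 1)" for t
  have w[measurable]: "w \<in> borel_measurable N"
    unfolding w_def[abs_def] by measurable
  have w_nonneg: "0 \<le> w t" for t
    by (simp add: w_def)
  have bind_density_fibre_eq: "bind P L = density (bind Q L) (\<lambda>t. ennreal (f (\<pi> t)))"
    unfolding P_eq by (rule bind_density_fibre[OF Q L \<pi> fibre_L]) measurable
  have weight_P: "(\<integral>\<^sup>+s. ennreal (f s powr (\<alpha> - 1)) \<partial>P) = (\<integral>\<^sup>+x. ennreal (f x powr \<alpha>) \<partial>Q)"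
    unfolding P_eq using f_nonneg by (intro nn_integral_powr_density) (simp add: measurable_cong_sets[OF sets_Q refl])
  have weight_L: "(\<integral>\<^sup>+t. ennreal (w t) \<partial>bind P L) = (\<integral>\<^sup>+s. ennreal (f s powr (\<alpha> - 1)) \<partial>P)"
    unfolding w_def by (rule nn_integral_bind_fibre[OF P L \<pi> fibre_L]) measurable
  have "(\<integral>\<^sup>+t. ennreal (w t * h t) \<partial>bind P L) = (\<integral>\<^sup>+t. ennreal (w t) \<partial>bind P K)"
    unfolding PK_eq using h_nonneg w_nonneg
    by (subst nn_integral_density) (simp_all add: measurable_cong_sets[OF sets_PL refl] mult.commute ennreal_mult)
  also have "\<dots> = (\<integral>\<^sup>+s. ennreal (f s powr (\<alpha> - 1)) \<partial>P)"
    unfolding w_def by (rule nn_integral_bind_fibre[OF P K \<pi> fibre_K]) measurable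
  finally have weight_K: "(\<integral>\<^sup>+t. ennreal (w t * h t) \<partial>bind P L) = (\<integral>\<^sup>+t. ennreal (w t) \<partial>bind P L)"
    by (simp add: weight_L)
  have "(f (\<pi> t) * h t) powr \<alpha> = f (\<pi> t) * (w t * h t powr \<alpha>)" for t
    using f_nonneg[of "\<pi> t"] h_nonneg[of t] powr_mult_base[OF f_nonneg, of "\<pi> t" "\<alpha> - 1"]
    by (simp add: w_def powr_mult flip: mult.assoc)
  then have "(\<integral>\<^sup>+t. ennreal ((f (\<pi> t) * h t) powr \<alpha>) \<partial>bind Q L) = (\<integral>\<^sup>+t. ennreal (w t * h t powr \<alpha>) \<partial>bind P L)"
    unfolding bind_density_fibre_eq using f_nonneg w_nonneg
    by (subst nn_integral_density) (simp_all add: measurable_cong_sets[OF sets_QL refl] ennreal_mult)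
  also have "\<dots> \<le> ennreal (chord_moment e \<alpha> * C)"
    using h_bounds weight_K moment[folded weight_P weight_L] \<open>0 \<le> C\<close> e \<alpha> w_nonneg
    by (intro nn_integral_weighted_powr_le) (simp_all add: measurable_cong_sets[OF sets_PL refl])
  finally show ?thesis .
qed

lemma density_moment_le_bind:
  assumes P: "P \<in> space (prob_algebra M)" and Q: "Q \<in> space (prob_algebra M)"
    and K: "K \<in> M \<rightarrow>\<^sub>M prob_algebra N" and L: "L \<in> M \<rightarrow>\<^sub>M prob_algebra N"
    and \<pi>[measurable]: "\<pi> \<in> N \<rightarrow>\<^sub>M M"
    and fibre_K: "\<And>s. s \<in> space M \<Longrightarrow> distr (K s) M \<pi> = return M s"
    and fibre_L: "\<And>s. s \<in> space M \<Longrightarrow> distr (L s) M \<pi> = return M s"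
    and KL: "\<And>s X. s \<in> space M \<Longrightarrow> X \<in> sets N \<Longrightarrow> emeasure (K s) X \<le> exp e * emeasure (L s) X"
    and LK: "\<And>s X. s \<in> space M \<Longrightarrow> X \<in> sets N \<Longrightarrow> emeasure (L s) X \<le> exp e * emeasure (K s) X"
    and e: "0 < e" and \<alpha>: "1 \<le> \<alpha>" and "0 \<le> C"
    and PQ: "density_moment_le P Q \<alpha> C"
  shows "density_moment_le (bind P K) (bind Q L) \<alpha> (chord_moment e \<alpha> * C)"
proof -
  have sets_Q: "sets Q = sets M" and sets_QL: "sets (bind Q L) = sets N"
    using Q by (simp_all add: space_prob_algebra sets_bind'[OF Q L])
  obtain f where "f \<in> borel_measurable Q" and f_nonneg: "\<And>x. 0 \<le> f x"
    and P_eq: "P = density Q (\<lambda>x. ennreal (f x))" and moment: "(\<integral>\<^sup>+x. ennreal (f x powr \<alpha>) \<partial>Q) \<le> ennreal C"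
    using PQ by (auto simp: density_moment_le_def)
  then have f[measurable]: "f \<in> borel_measurable M"
    by (simp add: measurable_cong_sets[OF sets_Q refl])
  obtain h where h[measurable]: "h \<in> borel_measurable N"
    and h_bounds: "\<And>x. exp (-e) \<le> h x" "\<And>x. h x \<le> exp e"
    and PK_eq: "bind P K = density (bind P L) (\<lambda>x. ennreal (h x))"
    using bind_density_bounded_ratio[OF P K L KL LK] e by (metis less_imp_le)
  have h_nonneg: "0 \<le> h x" for x
    using h_bounds(1)[of x] by (meson exp_ge_zero order_trans)
  have bind_density_fibre_eq: "bind P L = density (bind Q L) (\<lambda>t. ennreal (f (\<pi> t)))"
    unfolding P_eq by (rule bind_density_fibre[OF Q L \<pi> fibre_L]) measurable
  define g where "g t = f (\<pi> t) * h t" for t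
  have "bind P K = density (bind Q L) (\<lambda>t. ennreal (g t))"
    unfolding PK_eq bind_density_fibre_eq using f_nonneg h_nonneg
    by (subst density_density_eq) (simp_all add: g_def ennreal_mult measurable_cong_sets[OF sets_QL refl])
  moreover have "g \<in> borel_measurable (bind Q L)" "\<forall>x. 0 \<le> g x"
    using f_nonneg h_nonneg unfolding g_def[abs_def] by (simp_all add: measurable_cong_sets[OF sets_QL refl])
  moreover have "(\<integral>\<^sup>+t. ennreal (g t powr \<alpha>) \<partial>bind Q L) \<le> ennreal (chord_moment e \<alpha> * C)"
    unfolding g_def
    by (rule nn_integral_powr_product_density_le[OF P Q K L \<pi> fibre_K fibre_L f f_nonneg P_eq moment
          \<open>0 \<le> C\<close> h h_bounds PK_eq e \<alpha>])
  ultimately show ?thesis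
    unfolding density_moment_le_def by blast
qed

section \<open>Adaptive composition\<close>

definition extend_kernel ::
  "(nat \<Rightarrow> 's measure) \<Rightarrow> (nat \<Rightarrow> (nat \<Rightarrow> 's) \<Rightarrow> 'd list \<Rightarrow> 's measure) \<Rightarrow> nat \<Rightarrow> 'd list
     \<Rightarrow> (nat \<Rightarrow> 's) \<Rightarrow> (nat \<Rightarrow> 's) measure" where
  "extend_kernel S A i D s = distr (A i s D) (PiM {..<Suc i} S) (\<lambda>x. s(i := x))"

lemma adaptive_comp_Suc_extend_kernel: "adaptive_comp S A (Suc i) D = bind (adaptive_comp S A i D) (extend_kernel S A i D)"
  by (simp add: extend_kernel_def[abs_def])

lemma measurable_extend_kernel:
  assumes "(\<lambda>s. A i s D) \<in> PiM {..<i} S \<rightarrow>\<^sub>M prob_algebra (S i)"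
  shows "extend_kernel S A i D \<in> PiM {..<i} S \<rightarrow>\<^sub>M prob_algebra (PiM {..<Suc i} S)"
  unfolding extend_kernel_def
proof (rule measurable_distr_prob_space2[OF assms])
  show "(\<lambda>(s, x). s(i := x)) \<in> PiM {..<i} S \<Otimes>\<^sub>M S i \<rightarrow>\<^sub>M PiM {..<Suc i} S"
    using measurable_add_dim[of i "{..<i}" S] by (simp add: lessThan_Suc)
qed

lemma adaptive_comp_in_prob_algebra:
  assumes "\<And>j. j < i \<Longrightarrow> (\<lambda>s. A j s D) \<in> PiM {..<j} S \<rightarrow>\<^sub>M prob_algebra (S j)"
  shows "adaptive_comp S A i D \<in> space (prob_algebra (PiM {..<i} S))"
  using assms
proof (induction i)
  case 0
  show ?case by (simp add: space_prob_algebra prob_space_return space_PiM_empty)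
next
  case (Suc i)
  have P: "adaptive_comp S A i D \<in> space (prob_algebra (PiM {..<i} S))" using Suc by simp
  have K: "extend_kernel S A i D \<in> PiM {..<i} S \<rightarrow>\<^sub>M prob_algebra (PiM {..<Suc i} S)"
    using Suc.prems by (intro measurable_extend_kernel) simp
  show ?case
    unfolding adaptive_comp_Suc_extend_kernel space_prob_algebra
    using prob_space_bind'[OF P K] sets_bind'[OF P K] by simp
qed

lemma distr_extend_kernel_restrict:
  assumes s: "s \<in> space (PiM {..<i} S)" and A: "A i s D \<in> space (prob_algebra (S i))"
  shows "distr (extend_kernel S A i D s) (PiM {..<i} S) (\<lambda>t. restrict t {..<i}) = return (PiM {..<i} S) s"
proof -
  interpret prob_space "A i s D" using A by (simp add: space_prob_algebra)
  have sets_A: "sets (A i s D) = sets (S i)" using A by (simp add: space_prob_algebra)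
  have upd: "(\<lambda>x. s(i := x)) \<in> A i s D \<rightarrow>\<^sub>M PiM {..<Suc i} S"
    using measurable_component_update[OF s, of i] by (simp add: lessThan_Suc measurable_cong_sets[OF sets_A refl])
  have "restrict (s(i := x)) {..<i} = s" for x
    using s by (auto simp: space_PiM PiE_def extensional_def restrict_def)
  then have "distr (extend_kernel S A i D s) (PiM {..<i} S) (\<lambda>t. restrict t {..<i})
      = distr (A i s D) (PiM {..<i} S) (\<lambda>_. s)"
    unfolding extend_kernel_def by (subst distr_distr[OF measurable_restrict_subset upd]) (auto simp: comp_def)
  also have "\<dots> = return (PiM {..<i} S) s"
    using s by simp
  finally show ?thesis .
qed

lemma emeasure_extend_kernel_le:
  assumes s: "s \<in> space (PiM {..<i} S)"
    and A: "A i s D \<in> space (prob_algebra (S i))" and A': "A i s D' \<in> space (prob_algebra (S i))"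
    and le: "\<And>Y. Y \<in> sets (S i) \<Longrightarrow> measure (A i s D) Y \<le> c * measure (A i s D') Y"
    and X: "X \<in> sets (PiM {..<Suc i} S)" and "0 \<le> c"
  shows "emeasure (extend_kernel S A i D s) X \<le> c * emeasure (extend_kernel S A i D' s) X"
proof -
  interpret A: prob_space "A i s D" using A by (simp add: space_prob_algebra)
  interpret A': prob_space "A i s D'" using A' by (simp add: space_prob_algebra)
  have sets_A: "sets (A i s D) = sets (S i)" and sets_A': "sets (A i s D') = sets (S i)"
    using A A' by (simp_all add: space_prob_algebra)
  have upd: "(\<lambda>x. s(i := x)) \<in> S i \<rightarrow>\<^sub>M PiM {..<Suc i} S"
    using measurable_component_update[OF s, of i] by (simp add: lessThan_Suc)
  define Y where "Y = (\<lambda>x. s(i := x)) -` X \<inter> space (S i)"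
  have Y: "Y \<in> sets (S i)"
    unfolding Y_def using measurable_sets[OF upd X] .
  have "emeasure (extend_kernel S A i E s) X = emeasure (A i s E) Y"
    if "sets (A i s E) = sets (S i)" for E
    unfolding extend_kernel_def Y_def
    using upd that sets_eq_imp_space_eq[OF that] X
    by (subst emeasure_distr) (simp_all add: measurable_cong_sets[OF that refl])
  then show ?thesis
    using le[OF Y] \<open>0 \<le> c\<close> sets_A sets_A'
    by (simp add: A.emeasure_eq_measure A'.emeasure_eq_measure ennreal_mult[symmetric] ennreal_leI)
qed

lemma adaptive_comp_density_moment_le:
  assumes kernel: "\<And>j. j < k \<Longrightarrow> (\<lambda>s. A j s D) \<in> PiM {..<j} S \<rightarrow>\<^sub>M prob_algebra (S j)"
    and kernel': "\<And>j. j < k \<Longrightarrow> (\<lambda>s. A j s D') \<in> PiM {..<j} S \<rightarrow>\<^sub>M prob_algebra (S j)"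
    and ratio: "\<And>j s Y. j < k \<Longrightarrow> s \<in> space (PiM {..<j} S) \<Longrightarrow> Y \<in> sets (S j) \<Longrightarrow>
      measure (A j s D) Y \<le> exp (e j) * measure (A j s D') Y"
    and ratio': "\<And>j s Y. j < k \<Longrightarrow> s \<in> space (PiM {..<j} S) \<Longrightarrow> Y \<in> sets (S j) \<Longrightarrow>
      measure (A j s D') Y \<le> exp (e j) * measure (A j s D) Y"
    and e: "\<And>j. j < k \<Longrightarrow> 0 < e j" and \<alpha>: "1 \<le> \<alpha>"
  shows "density_moment_le (adaptive_comp S A k D) (adaptive_comp S A k D') \<alpha> (\<Prod>j<k. chord_moment (e j) \<alpha>)"
proof -
  have "density_moment_le (adaptive_comp S A i D) (adaptive_comp S A i D') \<alpha> (\<Prod>j<i. chord_moment (e j) \<alpha>)"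
    if "i \<le> k" for i
    using that
  proof (induction i)
    case 0
    show ?case
      using adaptive_comp_in_prob_algebra[of 0 A D' S]
      by (simp add: density_moment_le_refl space_prob_algebra)
  next
    case (Suc i)
    then have "i < k" by simp
    have comp: "adaptive_comp S A i E \<in> space (prob_algebra (PiM {..<i} S))"
      if "\<And>j. j < k \<Longrightarrow> (\<lambda>s. A j s E) \<in> PiM {..<j} S \<rightarrow>\<^sub>M prob_algebra (S j)" for E
      using that \<open>i < k\<close> by (intro adaptive_comp_in_prob_algebra) simp
    have A: "A i s E \<in> space (prob_algebra (S i))"
      if "s \<in> space (PiM {..<i} S)" "\<And>j. j < k \<Longrightarrow> (\<lambda>s. A j s E) \<in> PiM {..<j} S \<rightarrow>\<^sub>M prob_algebra (S j)" for s E
      using measurable_space[OF that(2)[OF \<open>i < k\<close>] that(1)] .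
    have restrict: "(\<lambda>t. restrict t {..<i}) \<in> PiM {..<Suc i} S \<rightarrow>\<^sub>M PiM {..<i} S"
      by (rule measurable_restrict_subset) auto
    have "density_moment_le (bind (adaptive_comp S A i D) (extend_kernel S A i D))
        (bind (adaptive_comp S A i D') (extend_kernel S A i D')) \<alpha> (chord_moment (e i) \<alpha> * (\<Prod>j<i. chord_moment (e j) \<alpha>))"
      using \<open>i < k\<close> Suc
      by (intro density_moment_le_bind[OF comp[OF kernel] comp[OF kernel'] measurable_extend_kernel measurable_extend_kernel restrict]
          distr_extend_kernel_restrict emeasure_extend_kernel_le A kernel kernel' ratio ratio' e \<alpha>
          prod_nonneg less_imp_le[OF chord_moment_pos])
         auto
    then show ?case
      unfolding adaptive_comp_Suc_extend_kernel prod.lessThan_Suc by (simp only: mult.commute)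
  qed
  then show ?thesis by simp
qed

lemma neighboring_sym: "neighboring n D' D" if "neighboring n D D'"
proof -
  have "{j. j < n \<and> D' ! j \<noteq> D ! j} = {j. j < n \<and> D ! j \<noteq> D' ! j}" by auto
  then show ?thesis using that by (simp add: neighboring_def)
qed

lemma adaptive_comp_zcdp:
  assumes kernel: "\<And>i D. i < k \<Longrightarrow> length D = n \<Longrightarrow>
      (\<lambda>s. A i s D) \<in> PiM {..<i} S \<rightarrow>\<^sub>M prob_algebra (S i)"
    and priv: "\<And>i s. i < k \<Longrightarrow> s \<in> space (PiM {..<i} S) \<Longrightarrow> dp n (S i) (A i s) (eps i) 0"
    and eps_le: "\<And>i. i < k \<Longrightarrow> eps i \<le> budget a b k i"
    and "0 < a" "0 < b" "b < 1" and nb: "neighboring n D D'" and "1 < \<alpha>"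
  shows "density_moment_le (adaptive_comp S A k D) (adaptive_comp S A k D') \<alpha>
    (exp (\<alpha> * (\<alpha> - 1) * (a\<^sup>2 / (2 * real k * (1 - b)))))"
proof (rule density_moment_le_mono)
  have ratio: "measure (A j s E) Y \<le> exp (budget a b k j) * measure (A j s E') Y"
    if "j < k" "s \<in> space (PiM {..<j} S)" "Y \<in> sets (S j)" "neighboring n E E'" for j s Y E E'
  proof -
    have "measure (A j s E) Y \<le> exp (eps j) * measure (A j s E') Y"
      using priv[OF that(1,2)] that(3,4) unfolding dp_def by fastforce
    also have "\<dots> \<le> exp (budget a b k j) * measure (A j s E') Y"
      using eps_le[OF that(1)] by (simp add: mult_right_mono)
    finally show ?thesis .
  qed
  show "density_moment_le (adaptive_comp S A k D) (adaptive_comp S A k D') \<alpha> (\<Prod>j<k. chord_moment (budget a b k j) \<alpha>)"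
    using assms neighboring_sym[OF nb]
    by (intro adaptive_comp_density_moment_le kernel ratio budget_pos) (auto simp: neighboring_def)
  show "(\<Prod>j<k. chord_moment (budget a b k j) \<alpha>) \<le> exp (\<alpha> * (\<alpha> - 1) * (a\<^sup>2 / (2 * real k * (1 - b))))"
    using prod_chord_moment_budget_le assms by simp
qed

theorem mainTheorem8:
  fixes S :: "nat \<Rightarrow> 's measure"
    and A :: "nat \<Rightarrow> (nat \<Rightarrow> 's) \<Rightarrow> 'd list \<Rightarrow> 's measure"
    and n k :: nat and a b \<delta> :: real and eps :: "nat \<Rightarrow> real"
  assumes kernel: "\<And>i D. i < k \<Longrightarrow> length D = n \<Longrightarrow>
             (\<lambda>s. A i s D) \<in> measurable (PiM {..<i} S) (prob_algebra (S i))"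
    and priv: "\<And>i s. i < k \<Longrightarrow> s \<in> space (PiM {..<i} S) \<Longrightarrow>
             dp n (S i) (A i s) (eps i) 0"
    and eps_le: "\<And>i. i < k \<Longrightarrow> eps i \<le> ln (1 + a / (real k - b * real i))"
    and a_pos: "a > 0" and b_pos: "0 < b" and b_lt1: "b < 1"
    and delta_pos: "0 < \<delta>" and delta_lt1: "\<delta> < 1"
  shows "dp n (PiM {..<k} S) (adaptive_comp S A k)
           (a\<^sup>2 / (2 * real k * (1 - b)) + sqrt (2 * a\<^sup>2 * ln (1 / \<delta>) / (real k * (1 - b)))) \<delta>"
  unfolding dp_def
proof (intro allI impI ballI)
  fix D D' :: "'d list" and X
  assume nb: "neighboring n D D'" and X: "X \<in> sets (PiM {..<k} S)"
  define \<rho> where "\<rho> = a\<^sup>2 / (2 * real k * (1 - b))"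
  have comp: "prob_space (adaptive_comp S A k E)" "sets (adaptive_comp S A k E) = sets (PiM {..<k} S)"
    if "length E = n" for E
    using adaptive_comp_in_prob_algebra[of k A E S] kernel that by (simp_all add: space_prob_algebra)
  show "measure (adaptive_comp S A k D) X
        \<le> exp (a\<^sup>2 / (2 * real k * (1 - b)) + sqrt (2 * a\<^sup>2 * ln (1 / \<delta>) / (real k * (1 - b))))
           * measure (adaptive_comp S A k D') X + \<delta>"
  proof (cases "k = 0")
    case True
    then show ?thesis using delta_pos by simp
  next
    case False
    then have "0 < \<rho>" using a_pos b_lt1 by (simp add: \<rho>_def)
    have "length D = n" "length D' = n"
      using nb by (simp_all add: neighboring_def)
    have zcdp: "density_moment_le (adaptive_comp S A k D) (adaptive_comp S A k D') \<alpha> (exp (\<alpha> * (\<alpha> - 1) * \<rho>))"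
      if "1 < \<alpha>" for \<alpha>
      using adaptive_comp_zcdp[where k=k and n=n and A=A and S=S and eps=eps and a=a and b=b and D=D and D'=D']
        kernel priv eps_le a_pos b_pos b_lt1 nb that
      by (simp add: \<rho>_def budget_def)
    have "measure (adaptive_comp S A k D) X
        \<le> exp (\<rho> + 2 * sqrt (\<rho> * ln (1 / \<delta>))) * measure (adaptive_comp S A k D') X + \<delta>"
      using comp \<open>length D = n\<close> \<open>length D' = n\<close> X
      by (intro measure_le_of_zcdp[OF zcdp _ _ _ \<open>0 < \<rho>\<close> delta_pos delta_lt1]) auto
    moreover have "2 * a\<^sup>2 * ln (1 / \<delta>) / (real k * (1 - b)) = 2\<^sup>2 * (\<rho> * ln (1 / \<delta>))"
      using b_lt1 False by (simp add: \<rho>_def field_simps power2_eq_square)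
    then have "sqrt (2 * a\<^sup>2 * ln (1 / \<delta>) / (real k * (1 - b))) = 2 * sqrt (\<rho> * ln (1 / \<delta>))"
      by (simp add: real_sqrt_mult)
    ultimately show ?thesis
      by (simp add: \<rho>_def)
  qed
qed

end
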